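(* Let $\lambda=(\lambda_1,\ldots,\lambda_n)\in\mathbb{C}^n$ have pairwise distinct entries. Then for every $l\in\{1,\ldots,n\}$, every $k\in\{0,\ldots,n-1\}$ and every $t$, $$\dot\nu_{k,\lambda}(t)=\lambda_l\,\nu_{k,\lambda}(t)-\lambda_l\,\nu_{k,\lambda_{\neg l}}(t)+\nu_{k-1,\lambda_{\neg l}}(t),$$ where $\lambda_{\neg l}=(\lambda_1,\ldots,\lambda_{l-1},\lambda_{l+1},\ldots,\lambda_n)$.
   Context: For a tuple $\mu=(\mu_1,\ldots,\mu_p)$ of distinct complex numbers, $V_\mu$ is the $p\times p$ Vandermonde matrix with $(i,j)$ entry $\mu_j^{i-1}$ and the Vandermonde basis functions are defined by $[\nu_{0,\mu}(t),\ldots,\nu_{p-1,\mu}(t)]=[e^{\mu_1 t},\ldots,e^{\mu_p t}]V_\mu^{-1}$; by convention $\nu_{k,\mu}(t)=0$ for $k<0$ and for $k\ge p$ (in particular all $\nu_{k,\mu}\equiv 0$ when $\mu$ is empty). *)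

theory Defs
  imports "HOL-Analysis.Analysis" "Jordan_Normal_Form.Matrix"
begin

definition vandermonde :: "complex list \<Rightarrow> complex mat" where
  "vandermonde mu = mat (length mu) (length mu) (\<lambda>(i,j). (mu ! j) ^ i)"

text \<open>The inverse of the Vandermonde matrix (it exists when the entries are distinct).\<close>
definition vandermonde_inv :: "complex list \<Rightarrow> complex mat" where
  "vandermonde_inv mu = (SOME B. B \<in> carrier_mat (length mu) (length mu) \<and>
      B * vandermonde mu = 1\<^sub>m (length mu) \<and> vandermonde mu * B = 1\<^sub>m (length mu))"

text \<open>Vandermonde basis functions:
  [nu_0(t),...,nu_{p-1}(t)] = [e^{mu_1 t},...,e^{mu_p t}] V_mu^{-1};
  nu_k = 0 for k < 0 and k >= p. Index k is an integer.\<close>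
definition vbasis :: "int \<Rightarrow> complex list \<Rightarrow> real \<Rightarrow> complex" where
  "vbasis k mu t = (if 0 \<le> k \<and> k < int (length mu)
     then (\<Sum>j<length mu. exp (mu ! j * complex_of_real t) * vandermonde_inv mu $$ (j, nat k))
     else 0)"

end

theory Submission
  imports Defs "HOL-Computational_Algebra.Polynomial" "Jordan_Normal_Form.Determinant"
begin

text \<open>Let W be the inverse of the Vandermonde matrix of lam, so that
  nu_k(t) = sum_j e^(lam_j t) W_jk and row j of W holds the coefficients of the Lagrange
  polynomial L_j of the node lam_j. Differentiating termwise, it suffices to show
  sum_j (lam_j - lam_l) e^(lam_j t) W_jk = nu_(k-1, lam_not_l)(t) - lam_l nu_(k, lam_not_l)(t).
  The term j = l vanishes. For j \<noteq> l, let L'_j be the Lagrange polynomial of lam_j among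
  the remaining nodes; then (x - lam_l) L'_j(x) and (lam_j - lam_l) L_j(x) have degree below n
  and agree at all n nodes, so their coefficients agree. The coefficient of x^k of the former
  is W'_(j,k-1) - lam_l W'_(j,k), with W' the inverse Vandermonde matrix of the remaining nodes.
  Both sides vanish when k lies outside 0..<n, so the identity holds for every integer k.\<close>

definition lagrange_basis :: "'a::field list \<Rightarrow> nat \<Rightarrow> 'a poly" where
  "lagrange_basis mu j =
     Polynomial.smult (inverse (\<Prod>i\<in>{..<length mu} - {j}. mu ! j - mu ! i))
       (\<Prod>i\<in>{..<length mu} - {j}. [:- (mu ! i), 1:])"

lemma degree_lagrange_basis:
  assumes "j < length mu"
  shows "degree (lagrange_basis mu j) < length mu"
proof -
  let ?I = "{..<length mu} - {j}"
  have "degree (lagrange_basis mu j) \<le> degree (\<Prod>i\<in>?I. [:- (mu ! i), 1:])"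
    unfolding lagrange_basis_def by (rule degree_smult_le)
  also have "\<dots> \<le> (\<Sum>i\<in>?I. degree [:- (mu ! i), 1:])"
    using degree_prod_sum_le[of ?I "\<lambda>i. [:- (mu ! i), 1:]"] by (simp add: o_def)
  also have "\<dots> = card ?I" by simp
  also have "\<dots> < length mu" using assms by simp
  finally show ?thesis .
qed

lemma poly_lagrange_basis:
  assumes "distinct mu" "j < length mu" "m < length mu"
  shows "poly (lagrange_basis mu j) (mu ! m) = (if j = m then 1 else 0)"
proof (cases "j = m")
  case True
  have "(\<Prod>i\<in>{..<length mu} - {j}. mu ! j - mu ! i) \<noteq> 0"
    using assms by (auto simp: nth_eq_iff_index_eq)
  with True show ?thesis by (simp add: lagrange_basis_def poly_prod)
next
  case False
  have "(\<Prod>i\<in>{..<length mu} - {j}. mu ! m - mu ! i) = 0"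
    by (rule prod_zero) (use False assms in auto)
  with False show ?thesis by (simp add: lagrange_basis_def poly_prod)
qed

lemma poly_eq_sum_lessThan:
  fixes q :: "'a::comm_semiring_1 poly"
  assumes "degree q < p"
  shows "poly q x = (\<Sum>i<p. coeff q i * x ^ i)"
proof -
  have "poly q x = (\<Sum>i\<le>degree q. coeff q i * x ^ i)" by (rule poly_altdef)
  also have "\<dots> = (\<Sum>i<p. coeff q i * x ^ i)"
    by (rule sum.mono_neutral_left) (use assms in \<open>auto simp: coeff_eq_0\<close>)
  finally show ?thesis .
qed

lemma vandermonde_carrier: "vandermonde mu \<in> carrier_mat (length mu) (length mu)"
  by (simp add: vandermonde_def)

lemma index_vandermonde_mult:
  assumes "B \<in> carrier_mat (length mu) (length mu)" "j < length mu" "m < length mu"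
  shows "(B * vandermonde mu) $$ (j, m) = (\<Sum>i<length mu. B $$ (j, i) * (mu ! m) ^ i)"
  using assms by (simp add: vandermonde_def scalar_prod_def atLeast0LessThan)

lemma index_mult_vandermonde:
  assumes "B \<in> carrier_mat (length mu) (length mu)" "i < length mu" "k < length mu"
  shows "(vandermonde mu * B) $$ (i, k) = (\<Sum>m<length mu. (mu ! m) ^ i * B $$ (m, k))"
  using assms by (simp add: vandermonde_def scalar_prod_def atLeast0LessThan)

lemma vandermonde_left_inverse_exists:
  assumes "distinct mu"
  shows "\<exists>B \<in> carrier_mat (length mu) (length mu). B * vandermonde mu = 1\<^sub>m (length mu)"
proof
  let ?p = "length mu"
  define B where "B = mat ?p ?p (\<lambda>(j, i). coeff (lagrange_basis mu j) i)"
  show B: "B \<in> carrier_mat ?p ?p" by (simp add: B_def)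
  show "B * vandermonde mu = 1\<^sub>m ?p"
  proof (rule eq_matI)
    fix j m assume "j < dim_row (1\<^sub>m ?p)" "m < dim_col (1\<^sub>m ?p)"
    then have jm: "j < ?p" "m < ?p" by simp_all
    have "(B * vandermonde mu) $$ (j, m) = (\<Sum>i<?p. coeff (lagrange_basis mu j) i * (mu ! m) ^ i)"
      using jm by (subst index_vandermonde_mult[OF B jm]) (simp add: B_def)
    also have "\<dots> = poly (lagrange_basis mu j) (mu ! m)"
      by (rule poly_eq_sum_lessThan[symmetric]) (rule degree_lagrange_basis[OF jm(1)])
    also have "\<dots> = 1\<^sub>m ?p $$ (j, m)"
      using jm by (simp add: poly_lagrange_basis[OF assms])
    finally show "(B * vandermonde mu) $$ (j, m) = 1\<^sub>m ?p $$ (j, m)" .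
  qed (use B vandermonde_carrier in auto)
qed

lemma vandermonde_inv:
  assumes "distinct mu"
  shows "vandermonde_inv mu \<in> carrier_mat (length mu) (length mu)"
    and "vandermonde_inv mu * vandermonde mu = 1\<^sub>m (length mu)"
    and "vandermonde mu * vandermonde_inv mu = 1\<^sub>m (length mu)"
proof -
  obtain B where "B \<in> carrier_mat (length mu) (length mu)" "B * vandermonde mu = 1\<^sub>m (length mu)"
    using vandermonde_left_inverse_exists[OF assms] by blast
  with vandermonde_carrier mat_mult_left_right_inverse
  have "\<exists>B. B \<in> carrier_mat (length mu) (length mu) \<and>
      B * vandermonde mu = 1\<^sub>m (length mu) \<and> vandermonde mu * B = 1\<^sub>m (length mu)"
    by blast
  from someI_ex[OF this] show "vandermonde_inv mu \<in> carrier_mat (length mu) (length mu)"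
    and "vandermonde_inv mu * vandermonde mu = 1\<^sub>m (length mu)"
    and "vandermonde mu * vandermonde_inv mu = 1\<^sub>m (length mu)"
    unfolding vandermonde_inv_def by blast+
qed

lemma sum_vandermonde_inv_powers:
  assumes "distinct mu" "j < length mu" "m < length mu"
  shows "(\<Sum>i<length mu. vandermonde_inv mu $$ (j, i) * (mu ! m) ^ i) = (if j = m then 1 else 0)"
  using arg_cong[OF vandermonde_inv(2)[OF assms(1)], of "\<lambda>A. A $$ (j, m)"] assms
  by (simp add: index_vandermonde_mult vandermonde_inv(1))

lemma coeff_eq_sum_vandermonde_inv:
  assumes "distinct mu" "k < length mu"
  shows "c k = (\<Sum>m<length mu. (\<Sum>i<length mu. c i * (mu ! m) ^ i) * vandermonde_inv mu $$ (m, k))"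
proof -
  let ?p = "length mu" and ?W = "vandermonde_inv mu"
  have VW: "(\<Sum>m<?p. (mu ! m) ^ i * ?W $$ (m, k)) = (if i = k then 1 else 0)" if "i < ?p" for i
    using arg_cong[OF vandermonde_inv(3)[OF assms(1)], of "\<lambda>A. A $$ (i, k)"] that assms
    by (simp add: index_mult_vandermonde vandermonde_inv(1))
  have "c k = (\<Sum>i<?p. c i * (if i = k then 1 else 0))"
    using assms(2) by (simp add: if_distrib cong: if_cong)
  also have "\<dots> = (\<Sum>i<?p. c i * (\<Sum>m<?p. (mu ! m) ^ i * ?W $$ (m, k)))"
    by (simp add: VW)
  also have "\<dots> = (\<Sum>i<?p. \<Sum>m<?p. c i * (mu ! m) ^ i * ?W $$ (m, k))"
    by (simp add: sum_distrib_left mult.assoc)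
  also have "\<dots> = (\<Sum>m<?p. (\<Sum>i<?p. c i * (mu ! m) ^ i) * ?W $$ (m, k))"
    by (subst sum.swap) (simp add: sum_distrib_right)
  finally show ?thesis .
qed

definition vandermonde_inv_ext :: "complex list \<Rightarrow> nat \<Rightarrow> int \<Rightarrow> complex" where
  "vandermonde_inv_ext mu j k =
     (if 0 \<le> k \<and> k < int (length mu) then vandermonde_inv mu $$ (j, nat k) else 0)"

lemma vbasis_eq_sum:
  "vbasis k mu t = (\<Sum>j<length mu. exp (mu ! j * complex_of_real t) * vandermonde_inv_ext mu j k)"
  by (auto simp: vbasis_def vandermonde_inv_ext_def)

abbreviation drop_nth :: "nat \<Rightarrow> 'a list \<Rightarrow> 'a list" where
  "drop_nth l xs \<equiv> take l xs @ drop (Suc l) xs"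

lemma nth_drop_nth:
  "l < length xs \<Longrightarrow> i < length xs - 1 \<Longrightarrow> drop_nth l xs ! i = xs ! insert_index l i"
  by (auto simp: insert_index_def nth_append min_def)

lemma distinct_drop_nth: "distinct xs \<Longrightarrow> distinct (drop_nth l xs)"
  by (cases "l < length xs")
    (use distinct_take distinct_drop set_take_disj_set_drop_if_distinct[of xs l "Suc l"] in auto)

lemma bij_betw_insert_index:
  assumes "l < n"
  shows "bij_betw (insert_index l) {..<n - 1} ({..<n} - {l})"
proof -
  have "insert_index l ` {0..<n - 1} = {0..<Suc (n - 1)} - {l}"
    using assms by (intro insert_index_image) simp
  then show ?thesis
    using assms by (simp add: bij_betw_def insert_index_inj_on atLeast0LessThan)
qed

lemma sum_shift_times_linear:
  fixes a :: "int \<Rightarrow> 'a::comm_ring_1"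
  assumes "a (- 1) = 0" "a (int p) = 0"
  shows "(\<Sum>i<Suc p. (a (int i - 1) - c * a (int i)) * x ^ i) = (x - c) * (\<Sum>i<p. a (int i) * x ^ i)"
proof -
  have shift: "(\<Sum>i<Suc p. a (int i - 1) * x ^ i)
      = a (int 0 - 1) * x ^ 0 + (\<Sum>i<p. a (int (Suc i) - 1) * x ^ Suc i)"
    by (rule sum.lessThan_Suc_shift)
  have "(\<Sum>i<Suc p. (a (int i - 1) - c * a (int i)) * x ^ i)
      = (\<Sum>i<Suc p. a (int i - 1) * x ^ i) - c * (\<Sum>i<Suc p. a (int i) * x ^ i)"
    by (simp add: sum_subtractf sum_distrib_left algebra_simps del: sum.lessThan_Suc)
  also have "\<dots> = x * (\<Sum>i<p. a (int i) * x ^ i) - c * (\<Sum>i<p. a (int i) * x ^ i)"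
    unfolding shift using assms by (simp add: sum_distrib_left mult_ac)
  finally show ?thesis by (simp add: left_diff_distrib)
qed

lemma vandermonde_inv_ext_drop_nth:
  assumes d: "distinct lam" and l: "l < length lam" and j: "j < length lam - 1"
  shows "(lam ! insert_index l j - lam ! l) * vandermonde_inv_ext lam (insert_index l j) k
    = vandermonde_inv_ext (drop_nth l lam) j (k - 1)
      - lam ! l * vandermonde_inv_ext (drop_nth l lam) j k"
proof (cases "0 \<le> k \<and> k < int (length lam)")
  case False
  then show ?thesis using l by (auto simp: vandermonde_inv_ext_def)
next
  case True
  define q where "q = nat k"
  have q: "k = int q" "q < length lam" using True by (auto simp: q_def)
  let ?n = "length lam" and ?lam' = "drop_nth l lam" and ?s = "insert_index l j"
  define a where "a = vandermonde_inv_ext ?lam' j"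
  define c where "c i = a (int i - 1) - lam ! l * a (int i)" for i
  have n: "?n = Suc (length ?lam')" using l by simp
  have s: "?s < ?n" "?s \<noteq> l" using bij_betw_apply[OF bij_betw_insert_index[OF l]] j by auto
  have poly_c: "(\<Sum>i<?n. c i * x ^ i)
      = (x - lam ! l) * (\<Sum>i<length ?lam'. vandermonde_inv ?lam' $$ (j, i) * x ^ i)" for x
    unfolding n c_def
    by (subst sum_shift_times_linear) (simp_all add: a_def vandermonde_inv_ext_def)
  have nodes: "(\<Sum>i<?n. c i * (lam ! m) ^ i) = (if m = ?s then lam ! m - lam ! l else 0)"
    if m: "m < ?n" for m
  proof (cases "m = l")
    case True
    then show ?thesis using poly_c s by simp
  next
    case False
    have "m \<in> insert_index l ` {..<?n - 1}"
      unfolding bij_betw_imp_surj_on[OF bij_betw_insert_index[OF l]] using m False by simp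
    then obtain m' where m': "m' < ?n - 1" "m = insert_index l m'" by auto
    have "(m = ?s) = (m' = j)"
      unfolding m'(2) by (rule inj_on_eq_iff[OF insert_index_inj_on[of _ UNIV]]) simp_all
    with m' show ?thesis
      using poly_c sum_vandermonde_inv_powers[of ?lam' j m'] distinct_drop_nth[OF d] j l
      by (simp add: nth_drop_nth)
  qed
  have "c q = (\<Sum>m<?n. (\<Sum>i<?n. c i * (lam ! m) ^ i) * vandermonde_inv lam $$ (m, q))"
    by (rule coeff_eq_sum_vandermonde_inv[OF d q(2)])
  also have "\<dots> = (\<Sum>m<?n. if m = ?s then (lam ! m - lam ! l) * vandermonde_inv lam $$ (m, q) else 0)"
    by (rule sum.cong) (simp_all add: nodes)
  also have "\<dots> = (lam ! ?s - lam ! l) * vandermonde_inv lam $$ (?s, q)"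
    using s by simp
  finally show ?thesis using q by (simp add: c_def a_def vandermonde_inv_ext_def)
qed

lemma vbasis_drop_nth_eq_sum:
  assumes d: "distinct lam" and l: "l < length lam"
  shows "vbasis (k - 1) (drop_nth l lam) t - lam ! l * vbasis k (drop_nth l lam) t
    = (\<Sum>j<length lam.
         (lam ! j - lam ! l) * exp (lam ! j * complex_of_real t) * vandermonde_inv_ext lam j k)"
proof -
  let ?n = "length lam" and ?lam' = "drop_nth l lam"
  define g where "g j = (lam ! j - lam ! l) * exp (lam ! j * complex_of_real t) * vandermonde_inv_ext lam j k"
    for j
  have "vbasis (k - 1) ?lam' t - lam ! l * vbasis k ?lam' t
      = (\<Sum>j<?n - 1. exp (?lam' ! j * complex_of_real t)
           * (vandermonde_inv_ext ?lam' j (k - 1) - lam ! l * vandermonde_inv_ext ?lam' j k))"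
    using l by (simp add: vbasis_eq_sum sum_distrib_left sum_subtractf[symmetric] algebra_simps)
  also have "\<dots> = (\<Sum>j<?n - 1. g (insert_index l j))"
    by (rule sum.cong) (simp_all add: g_def nth_drop_nth l vandermonde_inv_ext_drop_nth[OF d l])
  also have "\<dots> = sum g ({..<?n} - {l})"
    by (rule sum.reindex_bij_betw[OF bij_betw_insert_index[OF l]])
  also have "\<dots> = sum g {..<?n}"
    by (rule sum.mono_neutral_left) (simp_all add: g_def)
  finally show ?thesis unfolding g_def .
qed

lemma has_vector_derivative_vbasis:
  "((\<lambda>s. vbasis k mu s) has_vector_derivative
      (\<Sum>j<length mu. mu ! j * exp (mu ! j * complex_of_real t) * vandermonde_inv_ext mu j k)) (at t)"
proof -
  have "((\<lambda>s. exp (c * complex_of_real s)) has_vector_derivative c * exp (c * complex_of_real t)) (at t)"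
    for c :: complex
    using exp_scaleR_has_vector_derivative_right[of c t]
    by (simp add: scaleR_conv_of_real mult.commute)
  then show ?thesis
    unfolding vbasis_eq_sum by (intro has_vector_derivative_sum has_vector_derivative_mult_left)
qed

theorem proposition5:
  fixes lam :: "complex list" and l :: nat and k :: int and t :: real
  assumes "distinct lam"
    and "l < length lam"
    and "0 \<le> k" and "k < int (length lam)"
  shows "((\<lambda>s. vbasis k lam s) has_vector_derivative
           (lam ! l * vbasis k lam t - lam ! l * vbasis k (take l lam @ drop (Suc l) lam) t
            + vbasis (k - 1) (take l lam @ drop (Suc l) lam) t)) (at t)"
proof -
  let ?e = "\<lambda>j. exp (lam ! j * complex_of_real t) * vandermonde_inv_ext lam j k"
  have "(\<Sum>j<length lam. lam ! j * ?e j)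
      = lam ! l * vbasis k lam t + (\<Sum>j<length lam. (lam ! j - lam ! l) * ?e j)"
    by (simp add: vbasis_eq_sum sum_distrib_left sum.distrib[symmetric] algebra_simps)
  also have "\<dots> = lam ! l * vbasis k lam t - lam ! l * vbasis k (drop_nth l lam) t
      + vbasis (k - 1) (drop_nth l lam) t"
    using vbasis_drop_nth_eq_sum[OF assms(1,2), of k t] by (simp add: mult.assoc)
  finally show ?thesis
    using has_vector_derivative_vbasis[of k lam t] by (simp add: mult.assoc)
qed

end
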